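(* Let $d_{in}, d_K, d_V, M$ be positive integers, let $W_Q, W_K \in \mathbb{R}^{d_{in}\times d_K}$ and $W_V \in \mathbb{R}^{d_{in}\times d_V}$ be weight matrices, let $b_{KV}\in\mathbb{R}^{d_K\times d_V}$ be a bias matrix, and let $X'\in\mathbb{R}^{M\times d_{in}}$ be a fixed matrix (the in-context prompt, whose rows are tokens). For matrices $Q\in\mathbb{R}^{n\times d_K}$, $K\in\mathbb{R}^{n\times d_K}$, $V\in\mathbb{R}^{n\times d_V}$ and $b\in\mathbb{R}^{d_K\times d_V}$ define the linear attention with Key-Value bias $$\mathrm{LinAttn}(Q,K,V,b) = Q\,(K^{T}V + b)\in\mathbb{R}^{n\times d_V}.$$ Set $$b'_{KV} = b_{KV} + W_K^{T}X'^{T}X'W_V.$$ Then for every $N\ge 1$ and every $X\in\mathbb{R}^{N\times d_{in}}$, writing $[X';X]\in\mathbb{R}^{(M+N)\times d_{in}}$ for the row-wise concatenation of $X'$ followed by $X$, the last $N$ rows of $$\mathrm{LinAttn}([X';X]W_Q,\,[X';X]W_K,\,[X';X]W_V,\,b_{KV})$$ are equal to $$\mathrm{LinAttn}(XW_Q,\,XW_K,\,XW_V,\,b'_{KV}).$$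
   Context: Tokens are the rows of the matrices $X'$ and $X$; $[X';X]$ denotes stacking the rows of $X'$ on top of the rows of $X$. No causal mask and no positional encoding are used in this linear attention. *)

theory Defs
  imports "HOL-Analysis.Analysis"
begin

text \<open>Linear attention with Key-Value bias: LinAttn(Q,K,V,b) = Q (K^T V + b).
  Matrices are HOL-Analysis matrices real^cols^rows; row i of A is A $ i.\<close>
definition LinAttn ::
  "real^'dk^'r \<Rightarrow> real^'dk^'r \<Rightarrow> real^'dv^'r \<Rightarrow> real^'dv^'dk \<Rightarrow> real^'dv^'r" where
  "LinAttn Q K V b = Q ** (transpose K ** V + b)"

definition stack_rows :: "'a^'c^'m \<Rightarrow> 'a^'c^'n \<Rightarrow> 'a^'c^('m + 'n)" where
  "stack_rows A B = (\<chi> i. case i of Inl a \<Rightarrow> A $ a | Inr b \<Rightarrow> B $ b)"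

end

theory Submission
  imports Defs
begin

text \<open>Without a causal mask, the prompt enters the attention of the later tokens only through the
  Gram-type product \<open>K'\<^sup>T V'\<close> of its keys and values, since \<open>[K';K]\<^sup>T [V';V] = K'\<^sup>T V' + K\<^sup>T V\<close>.
  This product is independent of the query tokens and can therefore be absorbed into the bias.\<close>

lemma stack_rows_Inl [simp]: "stack_rows A B $ Inl i = A $ i"
  and stack_rows_Inr [simp]: "stack_rows A B $ Inr j = B $ j"
  by (simp_all add: stack_rows_def)

lemma matrix_mul_stack_rows:
  fixes A :: "'a::semiring_1^'n::finite^'m::finite" and B :: "'a^'n^'k::finite"
    and C :: "'a^'p::finite^'n"
  shows "stack_rows A B ** C = stack_rows (A ** C) (B ** C)"
  by (simp add: vec_eq_iff matrix_matrix_mult_def stack_rows_def split: sum.split)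

lemma transpose_stack_rows_mult:
  fixes A :: "'a::semiring_1^'p::finite^'m::finite" and B :: "'a^'p^'n::finite"
    and C :: "'a^'q::finite^'m" and D :: "'a^'q^'n"
  shows "transpose (stack_rows A B) ** stack_rows C D = transpose A ** C + transpose B ** D"
  by (simp add: vec_eq_iff matrix_matrix_mult_def transpose_def sum.Plus
      flip: UNIV_Plus_UNIV)

lemma LinAttn_stack_rows_Inr:
  "LinAttn (stack_rows Q' Q) (stack_rows K' K) (stack_rows V' V) b $ Inr j
     = LinAttn Q K V (transpose K' ** V' + b) $ j"
  by (simp add: LinAttn_def matrix_mul_stack_rows transpose_stack_rows_mult add_ac)

theorem theorem4p1:
  fixes WQ WK :: "real^'dk::finite^'din::finite"
    and WV :: "real^'dv::finite^'din"
    and bKV :: "real^'dv^'dk"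
    and Xp :: "real^'din^'m::finite"
    and X :: "real^'din^'n::finite"
  shows "\<forall>j. (LinAttn (stack_rows Xp X ** WQ) (stack_rows Xp X ** WK) (stack_rows Xp X ** WV) bKV) $ Inr j
           = (LinAttn (X ** WQ) (X ** WK) (X ** WV)
                (bKV + transpose WK ** transpose Xp ** Xp ** WV)) $ j"
proof
  fix j
  have "transpose (Xp ** WK) ** (Xp ** WV) + bKV = bKV + transpose WK ** transpose Xp ** Xp ** WV"
    by (simp add: matrix_transpose_mul matrix_mul_assoc add.commute)
  then show "LinAttn (stack_rows Xp X ** WQ) (stack_rows Xp X ** WK) (stack_rows Xp X ** WV) bKV $ Inr j
      = LinAttn (X ** WQ) (X ** WK) (X ** WV) (bKV + transpose WK ** transpose Xp ** Xp ** WV) $ j"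
    by (simp only: matrix_mul_stack_rows LinAttn_stack_rows_Inr)
qed

end
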